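(* Let $\Pi$ be an $\mathrm{LP}^{\mathrm{MLN}}$ program such that $\mathrm{SM}'[\Pi]$ is not empty, and let $I$ be an interpretation. The following are equivalent: (1) $I$ is a (probabilistic) stable model of $\Pi$; (2) $I\in\mathrm{SM}'[\Pi]$; (3) $P'_\Pi(I)>0$.
   Context: Signature with finitely many ground atoms; interpretations are sets of ground atoms. A formula is negative if every atom occurrence is in the scope of negation. A rule has the form $A\leftarrow B\wedge N$ ($A$ a possibly empty disjunction of atoms, $B$ a conjunction of atoms, $N$ a negative formula), identified with $B\wedge N\rightarrow A$. The reduct $\Pi^I$ of a ground program consists of $A\leftarrow B$ for rules with $I\models N$; $I$ is a (deterministic) stable model if it is a minimal model of $\Pi^I$. An $\mathrm{LP}^{\mathrm{MLN}}$ program $\Pi$ is a finite set of weighted rules $w:R$, $w$ real (soft) or the symbol $\alpha$ (hard), identified with its ground instance. $\overline{\Pi}$ drops weights; $\Pi_I=\{w:R\in\Pi\mid I\models R\}$; $\Pi^{\rm hard}$, $\Pi^{\rm soft}$ are its hard and soft rules. $\mathrm{SM}[\Pi]=\{I\mid I$ stable model of $\overline{\Pi_I}\}$; with $\alpha$ a real parameter, $W_\Pi(I)=\exp(\sum_{w:R\in\Pi_I}w)$ if $I\in\mathrm{SM}[\Pi]$, else $0$; $P_\Pi(I)=\lim_{\alpha\to\infty}W_\Pi(I)/\sum_{J\in\mathrm{SM}[\Pi]}W_\Pi(J)$; $I$ is a (probabilistic) stable model of $\Pi$ if $P_\Pi(I)\ne0$. $\mathrm{SM}'[\Pi]$ is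 the set of $I$ that are stable models of $\overline{\Pi_I}$ and satisfy $\overline{\Pi^{\rm hard}}$; $W'_\Pi(I)=\exp(\sum_{w:R\in(\Pi^{\rm soft})_I}w)$ if $I\in\mathrm{SM}'[\Pi]$, else $0$; $P'_\Pi(I)=W'_\Pi(I)/\sum_{J\in\mathrm{SM}'[\Pi]}W'_\Pi(J)$. *)

theory Defs
  imports Complex_Main
begin

datatype 'a formula =
    Atom 'a | Top | Bot | Neg "'a formula"
  | Conj "'a formula" "'a formula" | Disj "'a formula" "'a formula"
  | Impl "'a formula" "'a formula"

fun fsat :: "'a set \<Rightarrow> 'a formula \<Rightarrow> bool" where
  "fsat I (Atom a) = (a \<in> I)"
| "fsat I Top = True"
| "fsat I Bot = False"
| "fsat I (Neg f) = (\<not> fsat I f)"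
| "fsat I (Conj f g) = (fsat I f \<and> fsat I g)"
| "fsat I (Disj f g) = (fsat I f \<or> fsat I g)"
| "fsat I (Impl f g) = (fsat I f \<longrightarrow> fsat I g)"

fun negative :: "'a formula \<Rightarrow> bool" where
  "negative (Atom a) = False"
| "negative Top = True"
| "negative Bot = True"
| "negative (Neg f) = True"
| "negative (Conj f g) = (negative f \<and> negative g)"
| "negative (Disj f g) = (negative f \<and> negative g)"
| "negative (Impl f g) = (negative f \<and> negative g)"

text \<open>A rule  A <- B /\ N : head = set of atoms of the disjunction A,
  body = set of atoms of the conjunction B, neg = negative formula N.\<close>
record 'a rule =
  head :: "'a set"
  body :: "'a set"
  neg  :: "'a formula"

definition rsat :: "'a set \<Rightarrow> 'a rule \<Rightarrow> bool" where
  "rsat I R \<longleftrightarrow> (body R \<subseteq> I \<and> fsat I (neg R)) \<longrightarrow> head R \<inter> I \<noteq> {}"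

definition pos_model :: "('a set \<times> 'a set) set \<Rightarrow> 'a set \<Rightarrow> bool" where
  "pos_model P J \<longleftrightarrow> (\<forall>(H, B) \<in> P. B \<subseteq> J \<longrightarrow> H \<inter> J \<noteq> {})"

definition reduct :: "'a rule set \<Rightarrow> 'a set \<Rightarrow> ('a set \<times> 'a set) set" where
  "reduct Pi I = {(head R, body R) | R. R \<in> Pi \<and> fsat I (neg R)}"

definition stable_model :: "'a rule set \<Rightarrow> 'a set \<Rightarrow> bool" where
  "stable_model Pi I \<longleftrightarrow> pos_model (reduct Pi I) I \<and>
     (\<forall>J. J \<subset> I \<longrightarrow> \<not> pos_model (reduct Pi I) J)"

datatype weight = Hard | Soft real

fun wval :: "real \<Rightarrow> weight \<Rightarrow> real" where
  "wval alpha Hard = alpha"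
| "wval alpha (Soft r) = r"

type_synonym 'a lpmln = "(weight \<times> 'a rule) set"

definition sat_part :: "'a lpmln \<Rightarrow> 'a set \<Rightarrow> 'a lpmln" where
  "sat_part Pi I = {wr \<in> Pi. rsat I (snd wr)}"

definition unweight :: "'a lpmln \<Rightarrow> 'a rule set" where
  "unweight Pi = snd ` Pi"

definition hard_part :: "'a lpmln \<Rightarrow> 'a lpmln" where
  "hard_part Pi = {wr \<in> Pi. fst wr = Hard}"

definition soft_part :: "'a lpmln \<Rightarrow> 'a lpmln" where
  "soft_part Pi = {wr \<in> Pi. fst wr \<noteq> Hard}"

definition SM :: "'a lpmln \<Rightarrow> 'a set set" where
  "SM Pi = {I. stable_model (unweight (sat_part Pi I)) I}"

definition W :: "real \<Rightarrow> 'a lpmln \<Rightarrow> 'a set \<Rightarrow> real" where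
  "W alpha Pi I = (if I \<in> SM Pi then exp (\<Sum>wr \<in> sat_part Pi I. wval alpha (fst wr)) else 0)"

definition P :: "'a::finite lpmln \<Rightarrow> 'a set \<Rightarrow> real" where
  "P Pi I = Lim at_top (\<lambda>alpha. W alpha Pi I / (\<Sum>J \<in> SM Pi. W alpha Pi J))"

definition prob_stable_model :: "'a::finite lpmln \<Rightarrow> 'a set \<Rightarrow> bool" where
  "prob_stable_model Pi I \<longleftrightarrow> P Pi I \<noteq> 0"

definition SM' :: "'a lpmln \<Rightarrow> 'a set set" where
  "SM' Pi = {I. stable_model (unweight (sat_part Pi I)) I \<and>
                (\<forall>R \<in> unweight (hard_part Pi). rsat I R)}"

text \<open>On soft rules wval ignores alpha.\<close>
definition W' :: "'a lpmln \<Rightarrow> 'a set \<Rightarrow> real" where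
  "W' Pi I = (if I \<in> SM' Pi then exp (\<Sum>wr \<in> sat_part (soft_part Pi) I. wval 0 (fst wr)) else 0)"

definition P' :: "'a::finite lpmln \<Rightarrow> 'a set \<Rightarrow> real" where
  "P' Pi I = W' Pi I / (\<Sum>J \<in> SM' Pi. W' Pi J)"

end

theory Submission
  imports Defs "HOL-Real_Asymp.Real_Asymp"
begin

text \<open>The weight of a stable model J of the unweighted program is
  exp (\<alpha> h(J) + s(J)), where h(J) counts the hard rules J satisfies and s(J) is
  its soft weight. Since h(J) is at most the number H of hard rules, with equality exactly
  for J \<in> SM'[\<Pi>], multiplying all weights by exp (-\<alpha> H) makes them converge to W'
  as \<alpha> \<rightarrow> \<infinity>. The normalised probabilities therefore converge to P', so P = P',
  and P' is positive exactly on SM'[\<Pi>] because SM'[\<Pi>] is nonempty.\<close>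

definition hard_count :: "'a lpmln \<Rightarrow> 'a set \<Rightarrow> nat" where
  "hard_count Pi J = card (hard_part (sat_part Pi J))"

definition soft_weight :: "'a lpmln \<Rightarrow> 'a set \<Rightarrow> real" where
  "soft_weight Pi J = (\<Sum>wr \<in> sat_part (soft_part Pi) J. wval 0 (fst wr))"

lemma wval_indep_of_alpha: "w \<noteq> Hard \<Longrightarrow> wval alpha w = wval 0 w"
  by (cases w) simp_all

lemma sum_wval_sat_part:
  assumes "finite Pi"
  shows "(\<Sum>wr \<in> sat_part Pi J. wval alpha (fst wr)) =
     alpha * real (hard_count Pi J) + soft_weight Pi J"
proof -
  let ?A = "sat_part Pi J"
  have "finite ?A" using assms by (simp add: sat_part_def)
  moreover have "?A = hard_part ?A \<union> soft_part ?A" "hard_part ?A \<inter> soft_part ?A = {}"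
    by (auto simp: hard_part_def soft_part_def)
  ultimately have "(\<Sum>wr \<in> ?A. wval alpha (fst wr)) =
      (\<Sum>wr \<in> hard_part ?A. wval alpha (fst wr)) + (\<Sum>wr \<in> soft_part ?A. wval alpha (fst wr))"
    by (metis finite_Un sum.union_disjoint)
  also have "(\<Sum>wr \<in> hard_part ?A. wval alpha (fst wr)) = (\<Sum>wr \<in> hard_part ?A. alpha)"
    by (rule sum.cong) (auto simp: hard_part_def)
  also have "(\<Sum>wr \<in> soft_part ?A. wval alpha (fst wr)) = (\<Sum>wr \<in> soft_part ?A. wval 0 (fst wr))"
    by (rule sum.cong) (auto simp: soft_part_def intro!: wval_indep_of_alpha)
  also have "soft_part ?A = sat_part (soft_part Pi) J"
    by (auto simp: soft_part_def sat_part_def)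
  finally show ?thesis by (simp add: hard_count_def soft_weight_def mult.commute)
qed

lemma W_eq_exp:
  assumes "finite Pi"
  shows "W alpha Pi J =
    (if J \<in> SM Pi then exp (alpha * real (hard_count Pi J) + soft_weight Pi J) else 0)"
  by (simp add: W_def sum_wval_sat_part[OF assms])

lemma W'_eq_exp: "W' Pi J = (if J \<in> SM' Pi then exp (soft_weight Pi J) else 0)"
  by (simp add: W'_def soft_weight_def)

lemma hard_part_sat_part_subset: "hard_part (sat_part Pi J) \<subseteq> hard_part Pi"
  by (auto simp: hard_part_def sat_part_def)

lemma hard_count_le:
  assumes "finite Pi"
  shows "hard_count Pi J \<le> card (hard_part Pi)"
  unfolding hard_count_def
  using assms by (intro card_mono hard_part_sat_part_subset) (simp add: hard_part_def)

lemma SM'_iff_SM_hard_count: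
  assumes "finite Pi"
  shows "J \<in> SM' Pi \<longleftrightarrow> J \<in> SM Pi \<and> hard_count Pi J = card (hard_part Pi)"
proof -
  have "(\<forall>R \<in> unweight (hard_part Pi). rsat J R) \<longleftrightarrow> hard_part (sat_part Pi J) = hard_part Pi"
    by (force simp: unweight_def hard_part_def sat_part_def)
  also have "\<dots> \<longleftrightarrow> hard_count Pi J = card (hard_part Pi)"
  proof -
    have "finite (hard_part Pi)" using assms by (simp add: hard_part_def)
    then show ?thesis
      unfolding hard_count_def using card_subset_eq hard_part_sat_part_subset by metis
  qed
  finally show ?thesis by (auto simp: SM'_def SM_def)
qed

lemma SM'_subset_SM:
  assumes "finite Pi"
  shows "SM' Pi \<subseteq> SM Pi"
  using SM'_iff_SM_hard_count[OF assms] by blast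

lemma rescaled_W_tendsto_W':
  assumes "finite Pi"
  shows "((\<lambda>alpha::real. exp (- alpha * card (hard_part Pi)) * W alpha Pi J) \<longlongrightarrow> W' Pi J) at_top"
proof -
  let ?K = "real (card (hard_part Pi))" and ?h = "real (hard_count Pi J)"
  have rescaled: "exp (- alpha * ?K) * W alpha Pi J =
      (if J \<in> SM Pi then exp (alpha * (?h - ?K) + soft_weight Pi J) else 0)" for alpha
    by (simp add: W_eq_exp[OF assms] mult_exp_exp algebra_simps)
  consider "J \<in> SM' Pi" | "J \<in> SM Pi" "?h < ?K" | "J \<notin> SM Pi"
    using SM'_iff_SM_hard_count[OF assms] hard_count_le[OF assms, of J] by fastforce
  then show ?thesis
  proof cases
    case 1
    then show ?thesis
      using SM'_iff_SM_hard_count[OF assms] by (simp only: rescaled) (simp add: W'_eq_exp)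
  next
    case 2
    then have "((\<lambda>alpha. exp (alpha * (?h - ?K) + soft_weight Pi J)) \<longlongrightarrow> 0) at_top"
      by real_asymp
    with 2 show ?thesis
      using SM'_iff_SM_hard_count[OF assms] by (simp only: rescaled) (simp add: W'_eq_exp)
  next
    case 3
    then show ?thesis
      using SM'_subset_SM[OF assms] by (simp only: rescaled) (auto simp: W'_eq_exp)
  qed
qed

lemma sum_W'_pos:
  fixes Pi :: "'a::finite lpmln"
  assumes "SM' Pi \<noteq> {}"
  shows "(\<Sum>J \<in> SM' Pi. W' Pi J) > 0"
proof -
  obtain J0 where "J0 \<in> SM' Pi" using assms by blast
  then show ?thesis by (intro sum_pos2[of _ J0]) (auto simp: W'_eq_exp)
qed

lemma P_eq_P':
  fixes Pi :: "'a::finite lpmln"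
  assumes "finite Pi" and "SM' Pi \<noteq> {}"
  shows "P Pi I = P' Pi I"
proof -
  define e where "e alpha = exp (- alpha * card (hard_part Pi))" for alpha :: real
  have num: "((\<lambda>alpha. e alpha * W alpha Pi J) \<longlongrightarrow> W' Pi J) at_top" for J
    unfolding e_def by (rule rescaled_W_tendsto_W'[OF assms(1)])
  have "(\<Sum>J \<in> SM Pi. W' Pi J) = (\<Sum>J \<in> SM' Pi. W' Pi J)"
    by (rule sum.mono_neutral_right[OF _ SM'_subset_SM[OF assms(1)]]) (auto simp: W'_eq_exp)
  with tendsto_sum[of "SM Pi" "\<lambda>J alpha. e alpha * W alpha Pi J", OF num]
  have den: "((\<lambda>alpha. \<Sum>J \<in> SM Pi. e alpha * W alpha Pi J) \<longlongrightarrow> (\<Sum>J \<in> SM' Pi. W' Pi J)) at_top"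
    by simp
  have "((\<lambda>alpha. e alpha * W alpha Pi I / (\<Sum>J \<in> SM Pi. e alpha * W alpha Pi J))
      \<longlongrightarrow> P' Pi I) at_top"
    unfolding P'_def using tendsto_divide[OF num den] sum_W'_pos[OF assms(2)] by simp
  moreover have "e alpha * W alpha Pi I / (\<Sum>J \<in> SM Pi. e alpha * W alpha Pi J) =
      W alpha Pi I / (\<Sum>J \<in> SM Pi. W alpha Pi J)" for alpha
    by (simp add: e_def sum_distrib_left[symmetric])
  ultimately show ?thesis
    unfolding P_def by (intro tendsto_Lim) simp_all
qed

lemma P'_nonneg: "P' Pi I \<ge> 0"
  by (simp add: P'_def W'_eq_exp sum_nonneg)

lemma P'_pos_iff:
  fixes Pi :: "'a::finite lpmln"
  assumes "SM' Pi \<noteq> {}"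
  shows "P' Pi I > 0 \<longleftrightarrow> I \<in> SM' Pi"
  using sum_W'_pos[OF assms] by (simp add: P'_def W'_eq_exp)

theorem proposition5:
  fixes Pi :: "'a::finite lpmln" and I :: "'a set"
  assumes "finite Pi"
    and "\<forall>wr \<in> Pi. negative (neg (snd wr))"
    and "SM' Pi \<noteq> {}"
  shows "(prob_stable_model Pi I \<longleftrightarrow> I \<in> SM' Pi) \<and> (I \<in> SM' Pi \<longleftrightarrow> P' Pi I > 0)"
proof -
  have "prob_stable_model Pi I \<longleftrightarrow> P' Pi I \<noteq> 0"
    by (simp add: prob_stable_model_def P_eq_P'[OF assms(1,3)])
  also have "\<dots> \<longleftrightarrow> P' Pi I > 0"
    using P'_nonneg[of Pi I] by linarith
  finally show ?thesis
    using P'_pos_iff[OF assms(3)] by blast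
qed

end
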